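(* Let $n\ge2$, let $I$ be an ideal of $\Phi_{A_{n-1}}$ such that $I^c$ is full, and let $\mathcal{A}_I=\{\{x\in\mathbb{R}^n:x_i-x_j=0\}: e_i-e_j\in I^c\}$. Then $$T_{\mathcal{A}_I}(x,y)=\frac{1}{(y-1)^{n-1}}\sum_{i=1}^{n}\Big(\prod_{\substack{j\in[n]\\ j\ne i}}\frac{(x-1)(y-1)-\mathrm{p}(j)}{\mathrm{p}(i)-\mathrm{p}(j)}\Big)\,\bar\chi_{\mathcal{A}_I}(\mathrm{p}(i),y),$$ where, with $A^{(1)}|\dots|A^{(r)}$ the partition of $[n]$ in accordance with $I$ and $R^{(u)}=\{v\in\{u+1,\dots,r\}: s_I(A^{(u)})\cap s_I(A^{(v)})\ne\emptyset\}$, for every odd prime $p$ $$\bar\chi_{\mathcal{A}_I}(p,t)=\frac1p\sum_{(a^{(u)}_s)}\ \prod_{u=1}^r\binom{\#A^{(u)}}{a^{(u)}_1,\dots,a^{(u)}_p}\ \cdot\ t^{\sum_{u=1}^r\sum_{s=1}^p\left(\binom{a^{(u)}_s}{2}+a^{(u)}_s\sum_{v\in R^{(u)}}a^{(v)}_s\right)},$$ the sum running over all families of nonnegative integers $(a^{(u)}_s)_{u\in[r],\,s\in[p]}$ with $\sum_{s=1}^p a^{(u)}_s=\#A^{(u)}$ for each $u$.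
   Context: $\Phi^+_{A_{n-1}}=\{e_i-e_j:1\le i<j\le n\}$ with simple roots $e_i-e_{i+1}$. Partial order: $e_i-e_j\preceq e_{i'}-e_{j'}$ iff $i'\le i$ and $j\le j'$. An ideal is an up-closed subset $I\subseteq\Phi^+_{A_{n-1}}$; $I^c=\Phi^+_{A_{n-1}}\setminus I$; $I^c$ is full if it contains every simple root. Let $e_{i_1}-e_{j_1},\dots,e_{i_k}-e_{j_k}$ be the maximal elements of $I^c$; the signature of $u\in[n]$ is $s_I(u)=\{l\in[k]: i_l\le u\le j_l\}$. The partition in accordance with $I$ is the partition $A^{(1)}|\dots|A^{(r)}$ of $[n]$ into maximal nonempty subsets on which $s_I$ is constant, indexed by increasing minima; $s_I(A^{(u)})$ is the common signature. $\mathrm{r}(\mathcal{B})=n-\dim\bigcap\mathcal{B}$. Tutte polynomial: $T_{\mathcal{A}}(x,y)=\sum_{\mathcal{B}\subseteq\mathcal{A}}(x-1)^{\mathrm{r}(\mathcal{A})-\mathrm{r}(\mathcal{B})}(y-1)^{\#\mathcal{B}-\mathrm{r}(\mathcal{B})}$. Coboundary polynomial: $\bar\chi_{\mathcal{A}}(q,t)=\sum_{\mathcal{B}\subseteq\mathcal{A}}q^{\mathrm{r}(\mathcal{A})-\mathrm{r}(\mathcal{B})}(t-1)^{\#\mathcal{B}}$. For $i\ge1$, $\mathrm{p}(i)$ is the $i$-th odd prime ($\mathrm{p}(1)=3,\mathrm{p}(2)=5,\dots$). *)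

theory Defs
  imports Complex_Main "HOL-Library.Function_Algebras" "HOL-Library.Infinite_Set"
    "HOL-Computational_Algebra.Primes"
begin

text \<open>The root e_i - e_j is represented by the pair (i,j).\<close>

definition pos_roots :: "nat \<Rightarrow> (nat \<times> nat) set" where
  "pos_roots n = {(i, j). 1 \<le> i \<and> i < j \<and> j \<le> n}"

definition root_le :: "nat \<times> nat \<Rightarrow> nat \<times> nat \<Rightarrow> bool" where
  "root_le a b \<longleftrightarrow> fst b \<le> fst a \<and> snd a \<le> snd b"

definition is_ideal :: "nat \<Rightarrow> (nat \<times> nat) set \<Rightarrow> bool" where
  "is_ideal n I \<longleftrightarrow> I \<subseteq> pos_roots n \<and>
     (\<forall>a\<in>I. \<forall>b\<in>pos_roots n. root_le a b \<longrightarrow> b \<in> I)"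

definition compl_roots :: "nat \<Rightarrow> (nat \<times> nat) set \<Rightarrow> (nat \<times> nat) set" where
  "compl_roots n I = pos_roots n - I"

definition is_full :: "nat \<Rightarrow> (nat \<times> nat) set \<Rightarrow> bool" where
  "is_full n C \<longleftrightarrow> (\<forall>i\<in>{1..<n}. (i, Suc i) \<in> C)"

definition max_elems :: "(nat \<times> nat) set \<Rightarrow> (nat \<times> nat) set" where
  "max_elems C = {a \<in> C. \<forall>b\<in>C. root_le a b \<longrightarrow> b = a}"

text \<open>Signature of u: the set of maximal elements (i_l,j_l) of I^c with i_l \<le> u \<le> j_l
  (the maximal elements themselves serve as the labels l).\<close>
definition sig :: "nat \<Rightarrow> (nat \<times> nat) set \<Rightarrow> nat \<Rightarrow> (nat \<times> nat) set" where
  "sig n I u = {m \<in> max_elems (compl_roots n I). fst m \<le> u \<and> u \<le> snd m}"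

definition blocks :: "nat \<Rightarrow> (nat \<times> nat) set \<Rightarrow> nat set set" where
  "blocks n I = {B. B \<noteq> {} \<and> B \<subseteq> {1..n} \<and>
      (\<forall>u\<in>B. \<forall>v\<in>B. sig n I u = sig n I v) \<and>
      (\<forall>B'. B \<subseteq> B' \<and> B' \<subseteq> {1..n} \<and> (\<forall>u\<in>B'. \<forall>v\<in>B'. sig n I u = sig n I v) \<longrightarrow> B' = B)}"

definition num_blocks :: "nat \<Rightarrow> (nat \<times> nat) set \<Rightarrow> nat" where
  "num_blocks n I = card (blocks n I)"

definition block :: "nat \<Rightarrow> (nat \<times> nat) set \<Rightarrow> nat \<Rightarrow> nat set" where
  "block n I u = (THE B. B \<in> blocks n I \<and>
      Min B = sorted_list_of_set (Min ` blocks n I) ! (u - 1))"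

definition block_sig :: "nat \<Rightarrow> (nat \<times> nat) set \<Rightarrow> nat \<Rightarrow> (nat \<times> nat) set" where
  "block_sig n I u = sig n I (Min (block n I u))"

definition Rset :: "nat \<Rightarrow> (nat \<times> nat) set \<Rightarrow> nat \<Rightarrow> nat set" where
  "Rset n I u = {v \<in> {u+1..num_blocks n I}. block_sig n I u \<inter> block_sig n I v \<noteq> {}}"

text \<open>R^n is modelled as the subspace of nat \<Rightarrow> real of functions vanishing outside {1..n}.\<close>
definition Rn :: "nat \<Rightarrow> (nat \<Rightarrow> real) set" where
  "Rn n = {x. \<forall>k. k \<notin> {1..n} \<longrightarrow> x k = 0}"

definition rscale :: "real \<Rightarrow> (nat \<Rightarrow> real) \<Rightarrow> (nat \<Rightarrow> real)" where
  "rscale c x = (\<lambda>k. c * x k)"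

definition hyperplane :: "nat \<Rightarrow> nat \<Rightarrow> nat \<Rightarrow> (nat \<Rightarrow> real) set" where
  "hyperplane n i j = {x \<in> Rn n. x i - x j = 0}"

definition arr :: "nat \<Rightarrow> (nat \<times> nat) set \<Rightarrow> (nat \<Rightarrow> real) set set" where
  "arr n I = {hyperplane n i j | i j. (i, j) \<in> compl_roots n I}"

definition arr_rank :: "nat \<Rightarrow> (nat \<Rightarrow> real) set set \<Rightarrow> nat" where
  "arr_rank n B = n - vector_space.dim rscale (Rn n \<inter> \<Inter>B)"

definition tutte :: "nat \<Rightarrow> (nat \<Rightarrow> real) set set \<Rightarrow> real \<Rightarrow> real \<Rightarrow> real" where
  "tutte n A x y = (\<Sum>B\<in>Pow A. (x - 1) ^ (arr_rank n A - arr_rank n B) *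
                                 (y - 1) ^ (card B - arr_rank n B))"

definition coboundary :: "nat \<Rightarrow> (nat \<Rightarrow> real) set set \<Rightarrow> real \<Rightarrow> real \<Rightarrow> real" where
  "coboundary n A q t = (\<Sum>B\<in>Pow A. q ^ (arr_rank n A - arr_rank n B) * (t - 1) ^ card B)"

text \<open>oddp i = the i-th odd prime (oddp 1 = 3).\<close>
definition oddp :: "nat \<Rightarrow> nat" where
  "oddp i = enumerate {p. prime p \<and> odd p} (i - 1)"

definition multinomial :: "nat \<Rightarrow> nat list \<Rightarrow> real" where
  "multinomial m ks = fact m / (\<Prod>k\<leftarrow>ks. fact k)"

text \<open>Families (a^(u)_s), u in [r], s in [p], of naturals with row sums #A^(u)
  (encoded as functions that vanish outside [r] x [p]).\<close>
definition families :: "nat \<Rightarrow> (nat \<times> nat) set \<Rightarrow> nat \<Rightarrow> (nat \<Rightarrow> nat \<Rightarrow> nat) set" where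
  "families n I p =
     {a. (\<forall>u s. (u \<notin> {1..num_blocks n I} \<or> s \<notin> {1..p}) \<longrightarrow> a u s = 0) \<and>
         (\<forall>u\<in>{1..num_blocks n I}. (\<Sum>s=1..p. a u s) = card (block n I u))}"

definition chi_formula :: "nat \<Rightarrow> (nat \<times> nat) set \<Rightarrow> nat \<Rightarrow> real \<Rightarrow> real" where
  "chi_formula n I p t = (1 / real p) *
     (\<Sum>a\<in>families n I p.
        (\<Prod>u=1..num_blocks n I. multinomial (card (block n I u)) (map (a u) [1..<p+1])) *
        t ^ (\<Sum>u=1..num_blocks n I. \<Sum>s=1..p.
               (a u s choose 2) + a u s * (\<Sum>v\<in>Rset n I u. a v s)))"

end

theory Submission
  imports Defs "HOL-Library.FuncSet" "HOL-Library.Indicator_Function" "HOL-Library.Disjoint_Sets"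
    "HOL-Computational_Algebra.Polynomial"
begin

text \<open>The arrangement A_I is the graphic arrangement of the graph on [n] whose edges are the
  roots of I^c. The intersection of a subarrangement E consists of the vectors that are constant
  on the connected components of E, so its rank is n minus the number of components. Hence
  (y - 1)^(n-1) T(x, y) is a polynomial of degree < n in q = (x - 1)(y - 1) whose value at q = p
  is the coboundary polynomial at p, and Lagrange interpolation at the first n odd primes gives
  the first formula.

  By the finite field method, p \<chi>(p, t) is the sum over all colourings x : [n] \<rightarrow> [p] of t raised
  to the number of monochromatic roots of I^c. Two vertices i < j span a root of I^c iff their
  signatures meet, which depends only on the blocks containing them; so the number of
  monochromatic roots is a function of the numbers a_s^(u) of vertices of block u with colour s,
  and the colourings with prescribed numbers are counted by products of multinomials.\<close>

definition linked :: "('a \<times> 'a) set \<Rightarrow> ('a \<times> 'a) set" where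
  "linked E = (E \<union> E\<inverse>)\<^sup>*"

definition component :: "nat \<Rightarrow> (nat \<times> nat) set \<Rightarrow> nat \<Rightarrow> nat set" where
  "component n E i = {j \<in> {1..n}. (i, j) \<in> linked E}"

definition components :: "nat \<Rightarrow> (nat \<times> nat) set \<Rightarrow> nat set set" where
  "components n E = component n E ` {1..n}"

lemma linked_refl [simp]: "(i, i) \<in> linked E"
  by (simp add: linked_def)

lemma linked_sym: "(i, j) \<in> linked E \<Longrightarrow> (j, i) \<in> linked E"
proof -
  have "(E \<union> E\<inverse>)\<inverse> = E \<union> E\<inverse>" by auto
  then show "(i, j) \<in> linked E \<Longrightarrow> (j, i) \<in> linked E"
    unfolding linked_def by (metis rtrancl_converseI)
qed

lemma linked_trans: "(i, j) \<in> linked E \<Longrightarrow> (j, k) \<in> linked E \<Longrightarrow> (i, k) \<in> linked E"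
  unfolding linked_def by (rule rtrancl_trans)

lemma linked_edge: "(i, j) \<in> E \<Longrightarrow> (i, j) \<in> linked E"
  unfolding linked_def by auto

lemma linked_const:
  assumes "\<forall>(a, b) \<in> E. x a = x b" and "(i, j) \<in> linked E"
  shows "x i = x j"
  using assms(2) unfolding linked_def
  by (induction rule: rtrancl_induct) (use assms(1) in auto)

lemma linked_insert:
  assumes "(u, v) \<in> linked (insert (a, b) E)"
  shows "(u, v) \<in> linked E \<or>
    ((u, a) \<in> linked E \<or> (u, b) \<in> linked E) \<and> ((a, v) \<in> linked E \<or> (b, v) \<in> linked E)"
  using assms unfolding linked_def[of "insert (a, b) E"]
proof (induction rule: rtrancl_induct)
  case (step y z)
  from step.hyps(2) have "(y, z) \<in> E \<or> (z, y) \<in> E \<or> y = a \<and> z = b \<or> y = b \<and> z = a"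
    by auto
  then have "(y, z) \<in> linked E \<or> y = a \<and> z = b \<or> y = b \<and> z = a"
    using linked_edge[of y z E] linked_sym[OF linked_edge, of z y E] by blast
  then show ?case
  proof (elim disjE conjE)
    assume yz: "(y, z) \<in> linked E"
    show ?case
      using step.IH linked_trans[OF _ yz] by blast
  qed (use step.IH in auto)
qed simp

lemma component_eq_iff:
  assumes "i \<in> {1..n}" "j \<in> {1..n}"
  shows "component n E i = component n E j \<longleftrightarrow> (i, j) \<in> linked E"
proof
  assume eq: "component n E i = component n E j"
  have "j \<in> component n E j"
    using assms(2) by (simp add: component_def)
  then have "j \<in> component n E i"
    by (simp only: eq)
  then show "(i, j) \<in> linked E"
    by (simp add: component_def)
next
  assume ij: "(i, j) \<in> linked E"
  have "(i, k) \<in> linked E \<longleftrightarrow> (j, k) \<in> linked E" for k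
    using linked_trans[OF ij, of k] linked_trans[OF linked_sym[OF ij], of k] by blast
  then show "component n E i = component n E j"
    unfolding component_def by simp
qed

lemma self_in_component: "i \<in> {1..n} \<Longrightarrow> i \<in> component n E i"
  by (simp add: component_def)

lemma component_subset: "component n E i \<subseteq> {1..n}"
  by (auto simp: component_def)

lemma component_in_components: "i \<in> {1..n} \<Longrightarrow> component n E i \<in> components n E"
  unfolding components_def by (rule imageI)

lemma components_finite [simp]: "finite (components n E)"
  by (simp add: components_def)

lemma in_components:
  assumes "Q \<in> components n E" "k \<in> Q"
  shows "Q = component n E k" "k \<in> {1..n}"
proof -
  obtain i where i: "i \<in> {1..n}" "Q = component n E i"
    using assms(1) by (auto simp: components_def)
  moreover from this have "k \<in> {1..n}" "(i, k) \<in> linked E"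
    using assms(2) by (simp_all add: component_def)
  ultimately show "Q = component n E k" "k \<in> {1..n}"
    using component_eq_iff[of i n k E] by simp_all
qed

lemma Min_component:
  assumes "Q \<in> components n E"
  shows "Min Q \<in> Q" "Min Q \<in> {1..n}" "component n E (Min Q) = Q"
proof -
  obtain i where i: "i \<in> {1..n}" "Q = component n E i"
    using assms by (auto simp: components_def)
  then have "finite Q" "i \<in> Q"
    using finite_subset[OF component_subset] self_in_component by auto
  then have "finite Q" "Q \<noteq> {}" by auto
  then show "Min Q \<in> Q" by simp
  then show "Min Q \<in> {1..n}" "component n E (Min Q) = Q"
    using in_components[OF assms] by simp_all
qed

lemma constant_on_edges_Min_component:
  assumes "\<forall>(a, b) \<in> E. x a = x b" "i \<in> {1..n}"
  shows "x (Min (component n E i)) = x i"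
proof -
  have "Min (component n E i) \<in> component n E i"
    using Min_component(1)[OF component_in_components[OF assms(2)]] .
  then have "(i, Min (component n E i)) \<in> linked E"
    by (simp add: component_def)
  then show ?thesis
    by (rule sym[OF linked_const[OF assms(1)]])
qed

lemma card_components_pos: "n \<ge> 1 \<Longrightarrow> card (components n E) \<ge> 1"
  by (simp add: components_def Suc_le_eq card_gt_0_iff)

lemma card_components_le: "card (components n E) \<le> n"
  unfolding components_def using card_image_le[of "{1..n}" "component n E"] by simp

lemma card_components_empty: "card (components n {}) = n"
proof -
  have "component n {} i = {i}" if "i \<in> {1..n}" for i
    using that by (auto simp: component_def linked_def)
  then have "components n {} = (\<lambda>i. {i}) ` {1..n}"
    unfolding components_def by auto
  then show ?thesis by (simp add: card_image)
qed

text \<open>Sending a component Q of E to the component of Min Q in insert (a, b) E is injective on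
  the components other than that of a.\<close>
lemma card_components_insert:
  assumes ab: "a \<in> {1..n}" "b \<in> {1..n}"
  shows "card (components n E) \<le> card (components n (insert (a, b) E)) + 1"
proof -
  let ?E' = "insert (a, b) E"
  let ?K = "components n E - {component n E a}"
  let ?f = "\<lambda>Q. component n ?E' (Min Q)"
  have "?f ` ?K \<subseteq> components n ?E'"
  proof
    fix P assume "P \<in> ?f ` ?K"
    then obtain Q where "Q \<in> components n E" "P = ?f Q" by blast
    then show "P \<in> components n ?E'"
      using Min_component(2)[of Q n E] unfolding components_def by blast
  qed
  moreover have "inj_on ?f ?K"
  proof (rule inj_onI)
    fix P Q assume P: "P \<in> ?K" and Q: "Q \<in> ?K" and eq: "?f P = ?f Q"
    then have PQ: "P \<in> components n E" "Q \<in> components n E" by simp_all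
    note MP = Min_component[OF PQ(1)] and MQ = Min_component[OF PQ(2)]
    have "(Min P, Min Q) \<in> linked ?E'"
      using eq component_eq_iff[OF MP(2) MQ(2)] by simp
    then have "(Min P, Min Q) \<in> linked E \<or>
        ((Min P, a) \<in> linked E \<or> (Min P, b) \<in> linked E) \<and>
        ((a, Min Q) \<in> linked E \<or> (b, Min Q) \<in> linked E)"
      by (rule linked_insert)
    moreover have "(Min P, a) \<notin> linked E"
      using component_eq_iff[OF MP(2) ab(1)] MP(3) P by auto
    moreover have "(a, Min Q) \<notin> linked E"
      using component_eq_iff[OF ab(1) MQ(2)] MQ(3) Q by auto
    ultimately have "(Min P, b) \<in> linked E \<and> (b, Min Q) \<in> linked E \<or> (Min P, Min Q) \<in> linked E"
      by blast
    then have "(Min P, Min Q) \<in> linked E"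
      using linked_trans[of "Min P" b E "Min Q"] by blast
    then have "component n E (Min P) = component n E (Min Q)"
      using component_eq_iff[OF MP(2) MQ(2)] by simp
    then show "P = Q"
      using MP(3) MQ(3) by simp
  qed
  ultimately have "card ?K \<le> card (components n ?E')"
    using card_inj_on_le[of ?f ?K] by simp
  then show ?thesis
    using card_Diff_singleton_if[of "components n E" "component n E a"] by (simp split: if_splits)
qed

lemma card_components_edges:
  assumes "finite E" "E \<subseteq> {1..n} \<times> {1..n}"
  shows "n \<le> card (components n E) + card E"
  using assms
proof (induction E rule: finite_induct)
  case empty
  then show ?case by (simp add: card_components_empty)
next
  case (insert e E)
  obtain a b where e: "e = (a, b)" by (cases e)
  then have "a \<in> {1..n}" "b \<in> {1..n}" using insert.prems by auto
  then have "card (components n E) \<le> card (components n (insert e E)) + 1"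
    unfolding e by (rule card_components_insert)
  with insert show ?case by simp
qed

lemma card_components_path:
  assumes "\<forall>i\<in>{1..<n}. (i, Suc i) \<in> E" "n \<ge> 1"
  shows "card (components n E) = 1"
proof -
  have "(1, i) \<in> linked E" if "1 \<le> i" "i \<le> n" for i
    using that
  proof (induction i rule: dec_induct)
    case (step i)
    then have "(1, i) \<in> linked E" "(i, Suc i) \<in> E"
      using assms(1) by auto
    then show ?case
      by (rule linked_trans[OF _ linked_edge])
  qed simp
  then have "component n E i = component n E 1" if "i \<in> {1..n}" for i
    using that assms(2) component_eq_iff[of i n 1 E] linked_sym[of 1 i E] by simp
  then have "components n E = (\<lambda>_. component n E 1) ` {1..n}"
    unfolding components_def by (rule image_cong[OF refl])
  also have "\<dots> = {component n E 1}"
    using assms(2) by (intro image_constant[of 1]) simp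
  finally show ?thesis by simp
qed

interpretation fun_space: vector_space rscale
  by unfold_locales (auto simp: rscale_def fun_eq_iff algebra_simps)

definition flat :: "nat \<Rightarrow> (nat \<times> nat) set \<Rightarrow> (nat \<Rightarrow> real) set" where
  "flat n E = {x \<in> Rn n. \<forall>(a, b) \<in> E. x a = x b}"

lemma sum_fun_apply: "(\<Sum>v\<in>A. f v) k = (\<Sum>v\<in>A. f v k)"
  by (induction A rule: infinite_finite_induct) auto

lemma inj_indicator_real: "inj (indicator :: nat set \<Rightarrow> nat \<Rightarrow> real)"
  by (rule injI) (metis indicator_eq_1_iff subsetI subset_antisym zero_neq_one)

lemma flat_subspace: "fun_space.subspace (flat n E)"
  unfolding fun_space.subspace_def flat_def Rn_def by (auto simp: rscale_def split: prod.splits)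

lemma indicator_component_in_flat:
  assumes "E \<subseteq> {1..n} \<times> {1..n}" "Q \<in> components n E"
  shows "indicator Q \<in> flat n E"
proof -
  have "indicator Q \<in> Rn n"
    using in_components(2)[OF assms(2)] by (auto simp: Rn_def indicator_def)
  moreover have "indicator Q a = (indicator Q b :: real)" if "(a, b) \<in> E" for a b
  proof -
    have ab: "a \<in> {1..n}" "b \<in> {1..n}" using that assms(1) by auto
    have "component n E a = component n E b"
      using component_eq_iff[OF ab] linked_edge[OF that] by simp
    moreover have "a \<in> Q \<longleftrightarrow> Q = component n E a" "b \<in> Q \<longleftrightarrow> Q = component n E b"
      using in_components(1)[OF assms(2)] self_in_component ab by metis+
    ultimately show ?thesis by (simp add: indicator_def)
  qed
  ultimately show ?thesis by (auto simp: flat_def)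
qed

lemma sum_indicator_components:
  assumes "k \<in> {1..n}"
  shows "(\<Sum>Q\<in>components n E. c Q * indicator Q k) = (c (component n E k) :: real)"
proof -
  have "(\<Sum>Q\<in>components n E. c Q * indicator Q k) =
      (\<Sum>Q\<in>{component n E k}. c Q * indicator Q k)"
  proof (rule sum.mono_neutral_right)
    show "{component n E k} \<subseteq> components n E"
      using assms by (simp add: components_def)
    show "\<forall>Q\<in>components n E - {component n E k}. c Q * indicator Q k = 0"
      using in_components(1) by (fastforce simp: indicator_def)
  qed simp
  then show ?thesis
    using self_in_component[OF assms] by simp
qed

lemma independent_indicator_components: "fun_space.independent (indicator ` components n E)"
proof -
  have inj: "inj_on (indicator :: nat set \<Rightarrow> nat \<Rightarrow> real) (components n E)"
    by (rule inj_on_subset[OF inj_indicator_real]) simp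
  have "c v = 0" if sum0: "(\<Sum>v\<in>indicator ` components n E. rscale (c v) v) = 0"
    and v: "v \<in> indicator ` components n E" for c v
  proof -
    obtain Q where Q: "Q \<in> components n E" "v = indicator Q" using v by auto
    have "0 = (\<Sum>v\<in>indicator ` components n E. rscale (c v) v) (Min Q)"
      using sum0 by simp
    also have "\<dots> = (\<Sum>P\<in>components n E. c (indicator P) * indicator P (Min Q))"
      by (simp add: sum_fun_apply rscale_def sum.reindex[OF inj])
    also have "\<dots> = c v"
      using sum_indicator_components[OF Min_component(2)[OF Q(1)]] Min_component(3)[OF Q(1)] Q(2)
      by simp
    finally show ?thesis by simp
  qed
  moreover have fin: "finite (indicator ` components n E :: (nat \<Rightarrow> real) set)"
    by simp
  ultimately show ?thesis
    unfolding fun_space.dependent_finite[OF fin] by blast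
qed

lemma flat_eq_span:
  assumes "E \<subseteq> {1..n} \<times> {1..n}"
  shows "flat n E = fun_space.span (indicator ` components n E)"
proof
  show "fun_space.span (indicator ` components n E) \<subseteq> flat n E"
    using indicator_component_in_flat[OF assms] flat_subspace
    by (intro fun_space.span_minimal) auto
next
  show "flat n E \<subseteq> fun_space.span (indicator ` components n E)"
  proof
    fix x assume x: "x \<in> flat n E"
    have "x = (\<Sum>Q\<in>components n E. rscale (x (Min Q)) (indicator Q))"
    proof
      fix k
      have "(\<Sum>Q\<in>components n E. rscale (x (Min Q)) (indicator Q)) k =
          (\<Sum>Q\<in>components n E. x (Min Q) * indicator Q k)"
        by (simp add: sum_fun_apply rscale_def)
      also have "\<dots> = x k"
      proof (cases "k \<in> {1..n}")
        case True
        have "x (Min (component n E k)) = x k"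
          using x True by (intro constant_on_edges_Min_component) (simp_all add: flat_def)
        then show ?thesis
          using sum_indicator_components[OF True, of "\<lambda>Q. x (Min Q)"] by simp
      next
        case False
        then show ?thesis
          using x in_components(2) by (auto simp: flat_def Rn_def indicator_def intro!: sum.neutral)
      qed
      finally show "x k = (\<Sum>Q\<in>components n E. rscale (x (Min Q)) (indicator Q)) k" by simp
    qed
    also have "\<dots> \<in> fun_space.span (indicator ` components n E)"
      by (intro fun_space.span_sum fun_space.span_scale fun_space.span_base) auto
    finally show "x \<in> fun_space.span (indicator ` components n E)" .
  qed
qed

lemma dim_flat:
  assumes "E \<subseteq> {1..n} \<times> {1..n}"
  shows "fun_space.dim (flat n E) = card (components n E)"
proof -
  have "fun_space.dim (flat n E) = card (indicator ` components n E :: (nat \<Rightarrow> real) set)"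
    unfolding flat_eq_span[OF assms]
    by (rule fun_space.dim_span_eq_card_independent[OF independent_indicator_components])
  also have "\<dots> = card (components n E)"
    by (intro card_image inj_on_subset[OF inj_indicator_real]) simp
  finally show ?thesis .
qed

definition root_hyperplane :: "nat \<Rightarrow> nat \<times> nat \<Rightarrow> (nat \<Rightarrow> real) set" where
  "root_hyperplane n e = hyperplane n (fst e) (snd e)"

lemma Inter_root_hyperplanes: "Rn n \<inter> \<Inter>(root_hyperplane n ` E) = flat n E"
  unfolding root_hyperplane_def hyperplane_def flat_def by (auto simp: case_prod_unfold)

lemma arr_rank_root_hyperplanes:
  assumes "E \<subseteq> {1..n} \<times> {1..n}"
  shows "arr_rank n (root_hyperplane n ` E) = n - card (components n E)"
  unfolding arr_rank_def Inter_root_hyperplanes dim_flat[OF assms] ..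

lemma inj_on_root_hyperplane:
  assumes "E \<subseteq> pos_roots n"
  shows "inj_on (root_hyperplane n) E"
proof (rule inj_onI)
  fix e e' assume e: "e \<in> E" "e' \<in> E" and eq: "root_hyperplane n e = root_hyperplane n e'"
  obtain i j i' j' where ij: "e = (i, j)" "e' = (i', j')" by (cases e, cases e')
  have P: "1 \<le> i" "i < j" "j \<le> n" "1 \<le> i'" "i' < j'" "j' \<le> n"
    using e assms ij by (auto simp: pos_roots_def)
  have "k \<in> {i', j'}" if k: "k \<in> {i, j}" for k
  proof -
    have "indicator {k} \<in> Rn n"
      using k P by (auto simp: Rn_def)
    moreover have "indicator {k} \<notin> root_hyperplane n e'"
      using k P eq[symmetric] by (auto simp: root_hyperplane_def hyperplane_def ij)
    ultimately have "indicator {k} i' \<noteq> (indicator {k} j' :: real)"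
      by (simp add: root_hyperplane_def hyperplane_def ij)
    then show ?thesis
      by (auto simp: indicator_def split: if_splits)
  qed
  then have "i \<in> {i', j'}" "j \<in> {i', j'}"
    by simp_all
  then have "i = i'" "j = j'"
    using P by auto
  then show "e = e'"
    using ij by simp
qed

definition colourings :: "nat \<Rightarrow> nat \<Rightarrow> (nat \<Rightarrow> nat) set" where
  "colourings n p = PiE {1..n} (\<lambda>_. {1..p})"

lemma finite_colourings: "finite (colourings n p)"
  by (simp add: colourings_def finite_PiE)

lemma card_colourings_constant_on_edges:
  assumes E: "E \<subseteq> {1..n} \<times> {1..n}"
  shows "card {x \<in> colourings n q. \<forall>(a, b) \<in> E. x a = x b} = q ^ card (components n E)"
proof -
  let ?X = "{x \<in> PiE {1..n} (\<lambda>_. {1..q}). \<forall>(a, b) \<in> E. x a = x b}"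
  let ?Y = "PiE (components n E) (\<lambda>_. {1..q})"
  let ?f = "\<lambda>x. restrict (\<lambda>Q. x (Min Q)) (components n E)"
  let ?g = "\<lambda>z. restrict (\<lambda>i. z (component n E i)) {1..n}"
  have "bij_betw ?f ?X ?Y"
  proof (rule bij_betw_byWitness[where f' = ?g])
    show "\<forall>x\<in>?X. ?g (?f x) = x"
    proof
      fix x assume x: "x \<in> ?X"
      then have "x (Min (component n E i)) = x i" if "i \<in> {1..n}" for i
        using that by (intro constant_on_edges_Min_component) simp_all
      then show "?g (?f x) = x"
        using x component_in_components by (auto simp: PiE_def extensional_def fun_eq_iff)
    qed
    show "\<forall>z\<in>?Y. ?f (?g z) = z"
      using Min_component(2,3) by (auto simp: PiE_def extensional_def fun_eq_iff)
    show "?f ` ?X \<subseteq> ?Y"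
    proof
      fix y assume "y \<in> ?f ` ?X"
      then obtain x where "x \<in> PiE {1..n} (\<lambda>_. {1..q})" "y = ?f x" by blast
      then show "y \<in> ?Y"
        using Min_component(2) by (auto simp: PiE_iff)
    qed
    show "?g ` ?Y \<subseteq> ?X"
    proof
      fix x assume "x \<in> ?g ` ?Y"
      then obtain z where z: "z \<in> ?Y" "x = ?g z" by blast
      have "x a = x b" if "(a, b) \<in> E" for a b
      proof -
        have ab: "a \<in> {1..n}" "b \<in> {1..n}" using that E by auto
        then have "component n E a = component n E b"
          using component_eq_iff linked_edge[OF that] by blast
        then show ?thesis using z(2) ab by simp
      qed
      moreover have "x \<in> PiE {1..n} (\<lambda>_. {1..q})"
        using z by (auto simp: components_def)
      ultimately show "x \<in> ?X" by auto
    qed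
  qed
  then have "card ?X = card ?Y" by (rule bij_betw_same_card)
  also have "\<dots> = q ^ card (components n E)" by (simp add: card_PiE)
  finally show ?thesis
    by (simp add: colourings_def)
qed

lemma sum_Pow_power_card:
  fixes a :: "'a :: comm_semiring_1"
  assumes "finite F"
  shows "(\<Sum>B\<in>Pow F. a ^ card B) = (a + 1) ^ card F"
  using prod_add[OF assms, of "\<lambda>_. a" "\<lambda>_. 1"] by simp

definition maps_with_fibres :: "'a set \<Rightarrow> nat \<Rightarrow> (nat \<Rightarrow> nat) \<Rightarrow> ('a \<Rightarrow> nat) set" where
  "maps_with_fibres A p k =
    {y \<in> PiE A (\<lambda>_. {1..p}). \<forall>s\<in>{1..p}. card {i \<in> A. y i = s} = k s}"

lemma maps_with_fibres_Suc_restrict: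
  assumes y: "y \<in> maps_with_fibres A (Suc p) k"
  defines "S \<equiv> {i \<in> A. y i = Suc p}"
  shows "card S = k (Suc p)" "restrict y (A - S) \<in> maps_with_fibres (A - S) p k"
proof -
  have vals: "y i \<in> {1..Suc p}" if "i \<in> A" for i
    using y that by (auto simp: maps_with_fibres_def PiE_iff)
  have counts: "card {i \<in> A. y i = s} = k s" if "s \<in> {1..Suc p}" for s
    using y that by (simp add: maps_with_fibres_def)
  show "card S = k (Suc p)"
    using counts[of "Suc p"] by (simp add: S_def)
  have "restrict y (A - S) i \<in> {1..p}" if "i \<in> A - S" for i
    using vals[of i] that by (auto simp: S_def)
  moreover have "{i \<in> A - S. restrict y (A - S) i = s} = {i \<in> A. y i = s}" if "s \<in> {1..p}" for s
    using that by (auto simp: S_def)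
  ultimately show "restrict y (A - S) \<in> maps_with_fibres (A - S) p k"
    using counts by (simp add: maps_with_fibres_def PiE_iff)
qed

lemma maps_with_fibres_Suc_extend:
  assumes S: "S \<subseteq> A" "card S = k (Suc p)" and z: "z \<in> maps_with_fibres (A - S) p k"
  defines "y \<equiv> \<lambda>i. if i \<in> S then Suc p else z i"
  shows "{i \<in> A. y i = Suc p} = S" "restrict y (A - S) = z" "y \<in> maps_with_fibres A (Suc p) k"
proof -
  have zA: "z \<in> PiE (A - S) (\<lambda>_. {1..p})"
    using z by (simp add: maps_with_fibres_def)
  have z_vals: "z i \<in> {1..p}" if "i \<in> A - S" for i
    using PiE_mem[OF zA that] .
  then show fibre: "{i \<in> A. y i = Suc p} = S"
    using S(1) by (force simp: y_def)
  show "restrict y (A - S) = z"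
    using zA by (auto simp: y_def PiE_def extensional_def fun_eq_iff)
  have "y i \<in> {1..Suc p}" if "i \<in> A" for i
    using z_vals[of i] that by (auto simp: y_def)
  moreover have "y \<in> extensional A"
    using zA S(1) by (auto simp: y_def PiE_iff extensional_def)
  moreover have "card {i \<in> A. y i = s} = k s" if "s \<in> {1..Suc p}" for s
  proof (cases "s = Suc p")
    case True
    then show ?thesis
      using fibre S(2) by simp
  next
    case False
    then have "{i \<in> A. y i = s} = {i \<in> A - S. z i = s}" "s \<in> {1..p}"
      using that by (auto simp: y_def)
    then show ?thesis
      using z by (simp add: maps_with_fibres_def)
  qed
  ultimately show "y \<in> maps_with_fibres A (Suc p) k"
    by (simp add: maps_with_fibres_def PiE_iff)
qed

lemma bij_betw_maps_with_fibres_Suc: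
  "bij_betw (\<lambda>y. ({i \<in> A. y i = Suc p}, restrict y (A - {i \<in> A. y i = Suc p})))
     (maps_with_fibres A (Suc p) k)
     (SIGMA S:{S. S \<subseteq> A \<and> card S = k (Suc p)}. maps_with_fibres (A - S) p k)"
  (is "bij_betw ?split ?Y ?Z")
proof (rule bij_betw_byWitness[where f' = "\<lambda>(S, z) i. if i \<in> S then Suc p else z i"])
  let ?join = "\<lambda>(S, z) i. if i \<in> S then Suc p else z i"
  show "\<forall>y\<in>?Y. ?join (?split y) = y"
    by (auto simp: maps_with_fibres_def PiE_def extensional_def fun_eq_iff)
  show "\<forall>w\<in>?Z. ?split (?join w) = w"
  proof
    fix w assume "w \<in> ?Z"
    then obtain S z where w: "w = (S, z)" "S \<subseteq> A" "card S = k (Suc p)"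
      "z \<in> maps_with_fibres (A - S) p k"
      by auto
    show "?split (?join w) = w"
      unfolding w(1) using maps_with_fibres_Suc_extend(1,2)[OF w(2-4)] by (simp only: prod.case)
  qed
  show "?split ` ?Y \<subseteq> ?Z"
    using maps_with_fibres_Suc_restrict by auto
  show "?join ` ?Z \<subseteq> ?Y"
    using maps_with_fibres_Suc_extend(3) by auto
qed

lemma card_maps_with_fibres:
  assumes "finite A" "(\<Sum>s=1..p. k s) = card A"
  shows "real (card (maps_with_fibres A p k)) = fact (card A) / (\<Prod>s=1..p. fact (k s))"
  using assms
proof (induction p arbitrary: A)
  case 0
  then have "maps_with_fibres A 0 k = {\<lambda>_. undefined}"
    by (auto simp: maps_with_fibres_def)
  then show ?case
    using "0.prems" by simp
next
  case (Suc p)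
  let ?K = "k (Suc p)"
  let ?Sub = "{S. S \<subseteq> A \<and> card S = ?K}"
  have fin: "finite (maps_with_fibres B p k)" if "finite B" for B :: "'a set"
    using that by (simp add: maps_with_fibres_def finite_PiE)
  have K: "?K \<le> card A"
    using Suc.prems(2) by simp
  have IH: "real (card (maps_with_fibres (A - S) p k)) = fact (card A - ?K) / (\<Prod>s=1..p. fact (k s))"
    if "S \<in> ?Sub" for S
  proof -
    have S: "S \<subseteq> A" "card S = ?K" using that by simp_all
    then have "card (A - S) = card A - ?K"
      using card_Diff_subset[OF finite_subset[OF S(1) Suc.prems(1)] S(1)] by simp
    then show ?thesis
      using Suc.IH[of "A - S"] Suc.prems by simp
  qed
  have "real (card (maps_with_fibres A (Suc p) k)) =
      real (card (SIGMA S:?Sub. maps_with_fibres (A - S) p k))"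
    using bij_betw_same_card[OF bij_betw_maps_with_fibres_Suc] by simp
  also have "\<dots> = (\<Sum>S\<in>?Sub. real (card (maps_with_fibres (A - S) p k)))"
    using Suc.prems(1) fin by (simp add: card_SigmaI)
  also have "\<dots> = real (card A choose ?K) * (fact (card A - ?K) / (\<Prod>s=1..p. fact (k s)))"
    using IH n_subsets[OF Suc.prems(1), of ?K] by simp
  also have "\<dots> = fact (card A) / (\<Prod>s=1..Suc p. fact (k s))"
    using binomial_fact[OF K] by (simp add: field_simps)
  finally show ?case .
qed

lemma card_PiE_disjoint_union:
  assumes "finite U" "disjoint_family_on B U" "\<And>u. u \<in> U \<Longrightarrow> Y u \<subseteq> PiE (B u) (\<lambda>_. S)"
  shows "card {x \<in> PiE (\<Union>u\<in>U. B u) (\<lambda>_. S). \<forall>u\<in>U. restrict x (B u) \<in> Y u} =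
    (\<Prod>u\<in>U. card (Y u))"
proof -
  let ?A = "\<Union>u\<in>U. B u"
  let ?X = "{x \<in> PiE ?A (\<lambda>_. S). \<forall>u\<in>U. restrict x (B u) \<in> Y u}"
  define part where "part i = (THE u. u \<in> U \<and> i \<in> B u)" for i
  define glue where "glue z = restrict (\<lambda>i. z (part i) i) ?A" for z :: "_ \<Rightarrow> _ \<Rightarrow> 'c"
  have part: "part i = u" if "u \<in> U" "i \<in> B u" for u i
    unfolding part_def using assms(2) that by (auto simp: disjoint_family_on_def)
  have restrict_glue: "restrict (glue z) (B u) = z u" if "z \<in> PiE U Y" "u \<in> U" for z u
  proof
    fix i
    have "z u \<in> PiE (B u) (\<lambda>_. S)"
      using PiE_mem[OF that] assms(3)[OF that(2)] by blast
    then have "z u \<in> extensional (B u)"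
      by (simp add: PiE_iff)
    then show "restrict (glue z) (B u) i = z u i"
      using that part by (auto simp: glue_def extensional_def)
  qed
  have "bij_betw (\<lambda>x. restrict (\<lambda>u. restrict x (B u)) U) ?X (PiE U Y)"
  proof (rule bij_betw_byWitness[where f' = glue])
    show "\<forall>x\<in>?X. glue (restrict (\<lambda>u. restrict x (B u)) U) = x"
    proof
      fix x assume "x \<in> ?X"
      then have "x \<in> extensional ?A" by (simp add: PiE_iff)
      then show "glue (restrict (\<lambda>u. restrict x (B u)) U) = x"
        using part by (auto simp: glue_def extensional_def fun_eq_iff)
    qed
    show "\<forall>z\<in>PiE U Y. restrict (\<lambda>u. restrict (glue z) (B u)) U = z"
      using restrict_glue by (auto simp: PiE_def extensional_def fun_eq_iff)
    show "(\<lambda>x. restrict (\<lambda>u. restrict x (B u)) U) ` ?X \<subseteq> PiE U Y"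
      by auto
    show "glue ` PiE U Y \<subseteq> ?X"
    proof clarify
      fix z assume z: "z \<in> PiE U Y"
      have "glue z i \<in> S" if "u \<in> U" "i \<in> B u" for u i
        using restrict_glue[OF z that(1)] z that assms(3) by (metis PiE_mem restrict_apply' subsetD)
      moreover have "glue z \<in> extensional ?A"
        by (simp add: glue_def)
      ultimately have "glue z \<in> PiE ?A (\<lambda>_. S)"
        by (auto simp: PiE_iff)
      then show "glue z \<in> PiE ?A (\<lambda>_. S) \<and> (\<forall>u\<in>U. restrict (glue z) (B u) \<in> Y u)"
        using restrict_glue[OF z] z by auto
    qed
  qed
  then have "card ?X = card (PiE U Y)"
    by (rule bij_betw_same_card)
  then show ?thesis
    by (simp add: card_PiE[OF assms(1)])
qed

lemma sum_by_class:
  assumes "finite V" "finite U" "b ` V \<subseteq> U"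
  shows "(\<Sum>i\<in>V. f (b i)) = (\<Sum>u\<in>U. card {i \<in> V. b i = u} * f u)"
proof -
  have "(\<Sum>i\<in>V. f (b i)) = (\<Sum>u\<in>U. \<Sum>i\<in>{i \<in> V. b i = u}. f (b i))"
    using sum.group[OF assms, of "\<lambda>i. f (b i)"] by simp
  also have "\<dots> = (\<Sum>u\<in>U. card {i \<in> V. b i = u} * f u)"
    by (intro sum.cong refl) simp
  finally show ?thesis .
qed

lemma card_pairs_by_class:
  assumes "finite V" "finite U" "b ` V \<subseteq> U"
  shows "card {(i, j) \<in> V \<times> V. M (b i) (b j)} =
    (\<Sum>u\<in>U. \<Sum>v\<in>U. if M u v then card {i \<in> V. b i = u} * card {i \<in> V. b i = v} else 0)"
proof -
  let ?c = "\<lambda>u. card {i \<in> V. b i = u}"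
  have "{(i, j) \<in> V \<times> V. M (b i) (b j)} = Sigma V (\<lambda>i. {j \<in> V. M (b i) (b j)})"
    by auto
  then have "card {(i, j) \<in> V \<times> V. M (b i) (b j)} = (\<Sum>i\<in>V. card {j \<in> V. M (b i) (b j)})"
    using assms(1) by (simp add: card_SigmaI)
  also have "\<dots> = (\<Sum>i\<in>V. \<Sum>v\<in>U. if M (b i) v then ?c v else 0)"
  proof (intro sum.cong refl)
    fix i
    have "card {j \<in> V. M (b i) (b j)} = (\<Sum>j\<in>V. if M (b i) (b j) then 1 else 0)"
      using assms(1) by (simp add: sum.inter_filter[symmetric])
    also have "\<dots> = (\<Sum>v\<in>U. ?c v * (if M (b i) v then 1 else 0))"
      by (rule sum_by_class[OF assms])
    finally show "card {j \<in> V. M (b i) (b j)} = (\<Sum>v\<in>U. if M (b i) v then ?c v else 0)"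
      by (simp add: if_distrib cong: if_cong)
  qed
  also have "\<dots> = (\<Sum>u\<in>U. ?c u * (\<Sum>v\<in>U. if M u v then ?c v else 0))"
    by (rule sum_by_class[OF assms])
  finally show ?thesis
    by (simp add: sum_distrib_left if_distrib cong: if_cong)
qed

lemma card_pairs_sym_refl:
  fixes R :: "'a::linorder \<Rightarrow> 'a \<Rightarrow> bool"
  assumes "finite V" "\<And>i j. R i j \<longleftrightarrow> R j i" "\<And>i. i \<in> V \<Longrightarrow> R i i"
  shows "card {(i, j) \<in> V \<times> V. R i j} = 2 * card {(i, j) \<in> V \<times> V. i < j \<and> R i j} + card V"
proof -
  let ?P = "{(i, j) \<in> V \<times> V. i < j \<and> R i j}"
  have split: "{(i, j) \<in> V \<times> V. R i j} = ?P \<union> (prod.swap ` ?P \<union> (\<lambda>i. (i, i)) ` V)"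
    using assms(2,3) by (auto simp: image_iff)
  have fin: "finite ?P"
    using assms(1) by (simp add: finite_subset[of _ "V \<times> V"] subset_iff)
  have "card (prod.swap ` ?P \<union> (\<lambda>i. (i, i)) ` V) = card (prod.swap ` ?P) + card ((\<lambda>i. (i, i)) ` V)"
    using fin assms(1) by (intro card_Un_disjoint) auto
  moreover have "card {(i, j) \<in> V \<times> V. R i j} = card ?P + card (prod.swap ` ?P \<union> (\<lambda>i. (i, i)) ` V)"
    unfolding split using fin assms(1) by (intro card_Un_disjoint) auto
  ultimately have "card {(i, j) \<in> V \<times> V. R i j} = card ?P + (card (prod.swap ` ?P) + card ((\<lambda>i. (i, i)) ` V))"
    by simp
  also have "card (prod.swap ` ?P) = card ?P"
    by (rule card_image) (simp add: inj_on_def)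
  also have "card ((\<lambda>i. (i, i)) ` V) = card V"
    by (rule card_image) (simp add: inj_on_def)
  finally show ?thesis by simp
qed

lemma choose_two_twice: "2 * (a choose 2) + a = a * (a::nat)"
  by (induction a) (auto simp: numeral_2_eq_2 algebra_simps)

lemma sum_sym_split:
  fixes c :: "'b::linorder \<Rightarrow> nat"
  assumes "finite U" "\<And>u v. M u v \<longleftrightarrow> M v u" "\<And>u. u \<in> U \<Longrightarrow> M u u"
  shows "(\<Sum>u\<in>U. \<Sum>v\<in>U. if M u v then c u * c v else 0) =
    2 * (\<Sum>u\<in>U. (c u choose 2) + c u * (\<Sum>v\<in>{v \<in> U. u < v \<and> M u v}. c v)) + (\<Sum>u\<in>U. c u)"
proof -
  define Rt where "Rt u = (\<Sum>v\<in>U. if u < v \<and> M u v then c u * c v else 0)" for u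
  define Lt where "Lt u = (\<Sum>v\<in>U. if v < u \<and> M u v then c u * c v else 0)" for u
  have row: "(\<Sum>v\<in>U. if M u v then c u * c v else 0) = c u * c u + Rt u + Lt u" if "u \<in> U" for u
  proof -
    have "(\<Sum>v\<in>U. if M u v then c u * c v else 0) =
        (\<Sum>v\<in>U. (if v = u then c u * c v else 0) + (if u < v \<and> M u v then c u * c v else 0)
          + (if v < u \<and> M u v then c u * c v else 0))"
      using assms(3)[OF that] by (intro sum.cong refl) auto
    then show ?thesis
      using that assms(1) by (simp add: sum.distrib Rt_def Lt_def)
  qed
  have "(\<Sum>u\<in>U. Lt u) = (\<Sum>v\<in>U. \<Sum>u\<in>U. if v < u \<and> M u v then c u * c v else 0)"
    unfolding Lt_def by (rule sum.swap)
  also have "\<dots> = (\<Sum>u\<in>U. Rt u)"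
    unfolding Rt_def using assms(2) by (intro sum.cong refl) (simp add: mult.commute)
  finally have "(\<Sum>u\<in>U. Lt u) = (\<Sum>u\<in>U. Rt u)" .
  then have "(\<Sum>u\<in>U. \<Sum>v\<in>U. if M u v then c u * c v else 0) =
      (\<Sum>u\<in>U. c u * c u) + 2 * (\<Sum>u\<in>U. Rt u)"
    using row by (simp add: sum.distrib)
  also have "(\<Sum>u\<in>U. c u * c u) = (\<Sum>u\<in>U. 2 * (c u choose 2) + c u)"
    by (simp add: choose_two_twice)
  also have "(\<Sum>u\<in>U. Rt u) = (\<Sum>u\<in>U. c u * (\<Sum>v\<in>{v \<in> U. u < v \<and> M u v}. c v))"
    unfolding Rt_def using assms(1) by (simp add: sum.inter_filter[symmetric] sum_distrib_left)
  finally show ?thesis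
    by (simp add: sum.distrib sum_distrib_left)
qed

lemma card_pairs_less_by_class:
  fixes b :: "'a::linorder \<Rightarrow> 'b::linorder"
  assumes "finite V" "finite U" "b ` V \<subseteq> U"
    and "\<And>u v. M u v \<longleftrightarrow> M v u" "\<And>u. u \<in> U \<Longrightarrow> M u u"
  defines "c \<equiv> \<lambda>u. card {i \<in> V. b i = u}"
  shows "card {(i, j) \<in> V \<times> V. i < j \<and> M (b i) (b j)} =
    (\<Sum>u\<in>U. (c u choose 2) + c u * (\<Sum>v\<in>{v \<in> U. u < v \<and> M u v}. c v))"
proof -
  have "2 * card {(i, j) \<in> V \<times> V. i < j \<and> M (b i) (b j)} + card V =
      card {(i, j) \<in> V \<times> V. M (b i) (b j)}"
    using assms by (intro card_pairs_sym_refl[symmetric]) auto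
  also have "\<dots> = (\<Sum>u\<in>U. \<Sum>v\<in>U. if M u v then c u * c v else 0)"
    unfolding c_def by (rule card_pairs_by_class[OF assms(1-3)])
  also have "\<dots> = 2 * (\<Sum>u\<in>U. (c u choose 2) + c u * (\<Sum>v\<in>{v \<in> U. u < v \<and> M u v}. c v))
      + (\<Sum>u\<in>U. c u)"
    by (rule sum_sym_split[OF assms(2,4,5)])
  also have "(\<Sum>u\<in>U. c u) = card V"
    using sum_by_class[OF assms(1-3), of "\<lambda>_. 1"] by (simp add: c_def)
  finally show ?thesis by simp
qed

lemma lagrange_interpolation:
  fixes P :: "'a :: field poly" and w :: "nat \<Rightarrow> 'a"
  assumes w: "inj_on w {1..N}" and deg: "degree P < N"
  shows "poly P z = (\<Sum>i=1..N. (\<Prod>j\<in>{1..N} - {i}. (z - w j) / (w i - w j)) * poly P (w i))"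
proof -
  define L where "L i = (\<Prod>j\<in>{1..N} - {i}. smult (1 / (w i - w j)) [:- w j, 1:])" for i
  define Q where "Q = (\<Sum>i=1..N. smult (poly P (w i)) (L i))"
  have poly_L: "poly (L i) v = (\<Prod>j\<in>{1..N} - {i}. (v - w j) / (w i - w j))" for i v
    unfolding L_def poly_prod by (intro prod.cong refl) (simp add: divide_inverse algebra_simps)
  have poly_Q: "poly Q v = (\<Sum>i=1..N. (\<Prod>j\<in>{1..N} - {i}. (v - w j) / (w i - w j)) * poly P (w i))" for v
    by (simp add: Q_def poly_sum poly_L mult.commute)
  have "degree (L i) \<le> N - 1" if "i \<in> {1..N}" for i
  proof -
    have "degree (L i) \<le> sum (degree \<circ> (\<lambda>j. smult (1 / (w i - w j)) [:- w j, 1:])) ({1..N} - {i})"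
      unfolding L_def by (rule degree_prod_sum_le) simp
    also have "\<dots> \<le> (\<Sum>j\<in>{1..N} - {i}. 1)"
      by (intro sum_mono) (simp add: degree_smult_le)
    finally show ?thesis using that by simp
  qed
  then have "degree Q \<le> N - 1"
    unfolding Q_def by (intro degree_sum_le) (auto intro: order.trans[OF degree_smult_le])
  moreover have "poly (L i) (w m) = (if m = i then 1 else 0)" if "i \<in> {1..N}" "m \<in> {1..N}" for i m
  proof (cases "m = i")
    case True
    have "w i \<noteq> w j" if "j \<in> {1..N} - {i}" for j
      using inj_onD[OF w] that \<open>i \<in> {1..N}\<close> by blast
    then show ?thesis
      using True by (simp add: poly_L)
  next
    case False
    then have "m \<in> {1..N} - {i}"
      using that by simp
    then show ?thesis
      using False by (auto simp: poly_L intro!: prod_zero bexI[of _ m])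
  qed
  then have "poly Q (w m) = poly P (w m)" if "m \<in> {1..N}" for m
    using that by (simp add: Q_def poly_sum if_distrib[of "(*) _"] cong: if_cong)
  moreover have "card (w ` {1..N}) = N"
    using card_image[OF w] by simp
  ultimately have "P = Q"
    using deg by (intro poly_eqI_degree[of "w ` {1..N}"]) auto
  then have "poly P z = poly Q z"
    by simp
  then show ?thesis
    unfolding poly_Q .
qed

corollary lagrange_interpolation_sum:
  fixes w :: "nat \<Rightarrow> 'a :: field"
  assumes "finite F" "\<And>e. e \<in> F \<Longrightarrow> k e < N" "inj_on w {1..N}"
  shows "(\<Sum>e\<in>F. c e * z ^ k e) =
    (\<Sum>i=1..N. (\<Prod>j\<in>{1..N} - {i}. (z - w j) / (w i - w j)) * (\<Sum>e\<in>F. c e * w i ^ k e))"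
proof -
  define P where "P = (\<Sum>e\<in>F. monom (c e) (k e))"
  have poly_P: "poly P v = (\<Sum>e\<in>F. c e * v ^ k e)" for v
    by (simp add: P_def poly_sum poly_monom)
  show ?thesis
  proof (cases "N = 0")
    case True
    then show ?thesis
      using assms(2) by fastforce
  next
    case False
    have "degree (monom (c e) (k e)) \<le> N - 1" if "e \<in> F" for e
      using degree_monom_le[of "c e" "k e"] assms(2)[OF that] by linarith
    then have "degree P \<le> N - 1"
      unfolding P_def using assms(1) by (intro degree_sum_le)
    then have "degree P < N"
      using False by simp
    then show ?thesis
      using lagrange_interpolation[OF assms(3), of P z] by (simp add: poly_P)
  qed
qed

lemma inj_on_oddp: "inj_on oddp {1..}"
proof -
  have "{p::nat. prime p \<and> odd p} = {p. prime p} - {2}"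
  proof (intro set_eqI iffI)
    fix p :: nat assume "p \<in> {p. prime p} - {2}"
    then show "p \<in> {p. prime p \<and> odd p}"
      using prime_ge_2_nat[of p] prime_odd_nat[of p] by auto
  qed auto
  then have "infinite {p::nat. prime p \<and> odd p}"
    using primes_infinite by simp
  then have "i - 1 = j - 1" if "oddp i = oddp j" for i j
    using inj_enumerate that unfolding oddp_def inj_def by blast
  then show ?thesis
    by (intro inj_onI) force
qed

locale full_ideal =
  fixes n :: nat and I :: "(nat \<times> nat) set"
  assumes n_ge_2: "n \<ge> 2" and ideal: "is_ideal n I" and full: "is_full n (compl_roots n I)"
begin

abbreviation "C \<equiv> compl_roots n I"
abbreviation "r \<equiv> num_blocks n I"

lemma compl_roots_subset: "C \<subseteq> pos_roots n"
  by (auto simp: compl_roots_def)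

lemma compl_roots_square: "C \<subseteq> {1..n} \<times> {1..n}"
  using compl_roots_subset by (auto simp: pos_roots_def)

lemma finite_compl_roots: "finite C"
  using compl_roots_square by (rule finite_subset) simp

lemma compl_roots_down_closed:
  assumes "a \<in> C" "b \<in> pos_roots n" "root_le b a"
  shows "b \<in> C"
proof (rule ccontr)
  assume "b \<notin> C"
  then have "b \<in> I" using assms(2) by (simp add: compl_roots_def)
  then have "a \<in> I" using ideal assms(1,3) by (auto simp: is_ideal_def compl_roots_def)
  then show False using assms(1) by (simp add: compl_roots_def)
qed

lemma compl_roots_below_max_elem:
  assumes "c \<in> C"
  shows "\<exists>m\<in>max_elems C. root_le c m"
proof -
  let ?S = "{b \<in> C. root_le c b}"
  let ?g = "\<lambda>b::nat \<times> nat. snd b + (n - fst b)"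
  have "finite ?S" "c \<in> ?S"
    using finite_compl_roots assms by (simp_all add: root_le_def)
  moreover have "?g b' < 2 * n + 1" if "b' \<in> ?S" for b'
  proof -
    have "b' \<in> {1..n} \<times> {1..n}"
      using that compl_roots_square by blast
    then show ?thesis by (cases b') auto
  qed
  ultimately obtain b where b: "b \<in> ?S" and b_max: "\<And>b'. b' \<in> ?S \<Longrightarrow> ?g b' \<le> ?g b"
    using ex_has_greatest_nat[of "\<lambda>b. b \<in> ?S" c ?g "2 * n + 1"] by blast
  have "b \<in> max_elems C"
    unfolding max_elems_def
  proof (intro CollectI conjI ballI impI)
    show "b \<in> C" using b by simp
    fix b' assume b': "b' \<in> C" "root_le b b'"
    then have "b' \<in> ?S" using b by (auto simp: root_le_def)
    then have "?g b' \<le> ?g b" by (rule b_max)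
    moreover have "fst b \<le> n" using b compl_roots_square by auto
    ultimately show "b' = b" using b'(2) by (auto simp: root_le_def prod_eq_iff)
  qed
  then show ?thesis using b by auto
qed

lemma compl_roots_iff_sig:
  assumes "i < j" "i \<in> {1..n}" "j \<in> {1..n}"
  shows "(i, j) \<in> C \<longleftrightarrow> sig n I i \<inter> sig n I j \<noteq> {}"
proof
  assume "(i, j) \<in> C"
  then obtain m where "m \<in> max_elems C" "root_le (i, j) m"
    using compl_roots_below_max_elem by blast
  then have "m \<in> sig n I i \<inter> sig n I j"
    using assms(1) by (auto simp: sig_def root_le_def)
  then show "sig n I i \<inter> sig n I j \<noteq> {}" by blast
next
  assume "sig n I i \<inter> sig n I j \<noteq> {}"
  then obtain m where m: "m \<in> max_elems C" "fst m \<le> i" "j \<le> snd m"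
    by (auto simp: sig_def)
  show "(i, j) \<in> C"
  proof (rule compl_roots_down_closed)
    show "m \<in> C" using m(1) by (simp add: max_elems_def)
    show "(i, j) \<in> pos_roots n" using assms by (auto simp: pos_roots_def)
    show "root_le (i, j) m" using m by (simp add: root_le_def)
  qed
qed

lemma sig_nonempty:
  assumes "i \<in> {1..n}"
  shows "sig n I i \<noteq> {}"
proof -
  obtain a where a: "(a, Suc a) \<in> C" "a \<le> i" "i \<le> Suc a"
  proof (cases "i < n")
    case True
    then show ?thesis using that[of i] full assms by (auto simp: is_full_def)
  next
    case False
    then have "i = n" "Suc (n - 1) = n" "n - 1 \<in> {1..<n}"
      using assms n_ge_2 by auto
    moreover from this(3) have "(n - 1, Suc (n - 1)) \<in> C"
      using full unfolding is_full_def by blast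
    ultimately show ?thesis
      using that[of "n - 1"] by simp
  qed
  then obtain m where "m \<in> max_elems C" "root_le (a, Suc a) m"
    using compl_roots_below_max_elem by blast
  then have "m \<in> sig n I i"
    using a by (auto simp: sig_def root_le_def)
  then show ?thesis by blast
qed

definition sig_class :: "nat \<Rightarrow> nat set" where
  "sig_class i = {j \<in> {1..n}. sig n I j = sig n I i}"

lemma blocks_eq_sig_class:
  assumes "B \<in> blocks n I" "i \<in> B"
  shows "B = sig_class i"
proof -
  have "B \<noteq> {} \<and> B \<subseteq> {1..n} \<and> (\<forall>u\<in>B. \<forall>v\<in>B. sig n I u = sig n I v) \<and>
      (\<forall>B'. B \<subseteq> B' \<and> B' \<subseteq> {1..n} \<and>
        (\<forall>u\<in>B'. \<forall>v\<in>B'. sig n I u = sig n I v) \<longrightarrow> B' = B)"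
    using assms(1) unfolding blocks_def by (rule CollectD)
  then have B: "B \<subseteq> {1..n}" "\<forall>u\<in>B. \<forall>v\<in>B. sig n I u = sig n I v"
    and maximal: "\<forall>B'. B \<subseteq> B' \<and> B' \<subseteq> {1..n} \<and>
      (\<forall>u\<in>B'. \<forall>v\<in>B'. sig n I u = sig n I v) \<longrightarrow> B' = B"
    by (rule conjunct1[OF conjunct2] conjunct1[OF conjunct2[OF conjunct2]]
        conjunct2[OF conjunct2[OF conjunct2]])+
  have "B \<subseteq> sig_class i"
    unfolding sig_class_def using B assms(2) by blast
  moreover have "sig_class i \<subseteq> {1..n}"
    by (auto simp: sig_class_def)
  moreover have "\<forall>u\<in>sig_class i. \<forall>v\<in>sig_class i. sig n I u = sig n I v"
    by (simp add: sig_class_def)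
  ultimately show "B = sig_class i"
    using maximal by (metis (no_types, lifting))
qed

lemma sig_class_in_blocks:
  assumes i: "i \<in> {1..n}"
  shows "sig_class i \<in> blocks n I"
  unfolding blocks_def mem_Collect_eq
proof (intro conjI allI impI)
  show "sig_class i \<noteq> {}" "sig_class i \<subseteq> {1..n}"
    "\<forall>u\<in>sig_class i. \<forall>v\<in>sig_class i. sig n I u = sig n I v"
    using i by (auto simp: sig_class_def)
  fix B' assume B': "sig_class i \<subseteq> B' \<and> B' \<subseteq> {1..n} \<and> (\<forall>u\<in>B'. \<forall>v\<in>B'. sig n I u = sig n I v)"
  show "B' = sig_class i"
  proof
    show "B' \<subseteq> sig_class i"
    proof
      fix j assume "j \<in> B'"
      moreover have "i \<in> B'"
        using B' i by (auto simp: sig_class_def)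
      ultimately have "j \<in> {1..n}" "sig n I j = sig n I i"
        using B' by blast+
      then show "j \<in> sig_class i"
        by (simp add: sig_class_def)
    qed
  qed (use B' in blast)
qed

lemma blocks_eq_sig_classes: "blocks n I = sig_class ` {1..n}"
proof
  show "blocks n I \<subseteq> sig_class ` {1..n}"
  proof
    fix B assume B: "B \<in> blocks n I"
    then obtain i where "i \<in> B" "B \<subseteq> {1..n}"
      unfolding blocks_def by blast
    then show "B \<in> sig_class ` {1..n}"
      using blocks_eq_sig_class[OF B] by blast
  qed
  show "sig_class ` {1..n} \<subseteq> blocks n I"
    using sig_class_in_blocks by blast
qed

lemma finite_blocks: "finite (blocks n I)"
  by (simp add: blocks_eq_sig_classes)

lemma blocks_subset: "B \<in> blocks n I \<Longrightarrow> B \<subseteq> {1..n}"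
  by (auto simp: blocks_eq_sig_classes sig_class_def)

lemma Min_in_block:
  assumes "B \<in> blocks n I"
  shows "Min B \<in> B"
proof (rule Min_in)
  show "finite B"
    using blocks_subset[OF assms] by (rule finite_subset) simp
  obtain i where "i \<in> {1..n}" "B = sig_class i"
    using assms by (auto simp: blocks_eq_sig_classes)
  then show "B \<noteq> {}"
    by (auto simp: sig_class_def)
qed

lemma inj_on_Min_blocks: "inj_on Min (blocks n I)"
  by (rule inj_onI) (metis Min_in_block blocks_eq_sig_class)


definition block_minima :: "nat list" where
  "block_minima = sorted_list_of_set (Min ` blocks n I)"

lemma length_block_minima: "length block_minima = r"
  unfolding block_minima_def num_blocks_def using card_image[OF inj_on_Min_blocks] by simp

lemma block_spec:
  assumes "u \<in> {1..r}"
  shows "block n I u \<in> blocks n I \<and> Min (block n I u) = block_minima ! (u - 1)"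
proof -
  have "u - 1 < length block_minima"
    using assms length_block_minima by auto
  then have "block_minima ! (u - 1) \<in> set block_minima"
    by (rule nth_mem)
  then have "block_minima ! (u - 1) \<in> Min ` blocks n I"
    using finite_blocks by (simp add: block_minima_def)
  then obtain B where B: "B \<in> blocks n I" "Min B = block_minima ! (u - 1)"
    by (metis imageE)
  have "\<exists>!B. B \<in> blocks n I \<and> Min B = block_minima ! (u - 1)"
  proof (rule ex1I[of _ B])
    fix B' assume "B' \<in> blocks n I \<and> Min B' = block_minima ! (u - 1)"
    then show "B' = B"
      using B inj_onD[OF inj_on_Min_blocks] by metis
  qed (use B in simp)
  then show ?thesis
    unfolding block_def block_minima_def[symmetric] by (rule theI')
qed

lemma block_in_blocks: "u \<in> {1..r} \<Longrightarrow> block n I u \<in> blocks n I"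
  using block_spec by blast

lemma inj_on_block: "inj_on (block n I) {1..r}"
proof (rule inj_onI)
  fix u v assume uv: "u \<in> {1..r}" "v \<in> {1..r}" "block n I u = block n I v"
  then have "block_minima ! (u - 1) = block_minima ! (v - 1)"
    using block_spec by metis
  moreover have "distinct block_minima"
    by (simp add: block_minima_def)
  moreover have "u - 1 < length block_minima" "v - 1 < length block_minima"
    using uv length_block_minima by auto
  ultimately have "u - 1 = v - 1"
    using nth_eq_iff_index_eq by blast
  then show "u = v" using uv by auto
qed

lemma blocks_eq_image_block: "blocks n I = block n I ` {1..r}"
proof -
  have "block n I ` {1..r} \<subseteq> blocks n I"
    using block_in_blocks by blast
  moreover have "card (block n I ` {1..r}) = card (blocks n I)"
    using card_image[OF inj_on_block] by (simp add: num_blocks_def)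
  ultimately show ?thesis
    using card_subset_eq[OF finite_blocks] by metis
qed

lemma block_subset: "u \<in> {1..r} \<Longrightarrow> block n I u \<subseteq> {1..n}"
  using block_in_blocks blocks_subset by blast

lemma finite_block: "u \<in> {1..r} \<Longrightarrow> finite (block n I u)"
  using block_subset finite_subset by blast

lemma disjoint_family_on_block: "disjoint_family_on (block n I) {1..r}"
  unfolding disjoint_family_on_def
proof (intro ballI impI)
  fix u v assume uv: "u \<in> {1..r}" "v \<in> {1..r}" "u \<noteq> v"
  show "block n I u \<inter> block n I v = {}"
  proof (rule ccontr)
    assume "block n I u \<inter> block n I v \<noteq> {}"
    then obtain j where "j \<in> block n I u" "j \<in> block n I v" by blast
    then have "block n I u = block n I v"
      using blocks_eq_sig_class block_in_blocks uv by metis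
    then show False
      using inj_onD[OF inj_on_block] uv by blast
  qed
qed

lemma UN_block: "(\<Union>u\<in>{1..r}. block n I u) = {1..n}"
proof -
  have "(\<Union>u\<in>{1..r}. block n I u) = \<Union>(blocks n I)"
    by (simp add: blocks_eq_image_block)
  also have "\<dots> = {1..n}"
    using blocks_subset by (auto simp: blocks_eq_sig_classes sig_class_def)
  finally show ?thesis .
qed

definition block_of :: "nat \<Rightarrow> nat" where
  "block_of i = (THE u. u \<in> {1..r} \<and> i \<in> block n I u)"

lemma block_of_eq:
  assumes "u \<in> {1..r}" "i \<in> block n I u"
  shows "block_of i = u"
  unfolding block_of_def
proof (rule the_equality)
  fix v assume "v \<in> {1..r} \<and> i \<in> block n I v"
  then show "v = u"
    using disjoint_family_on_block assms unfolding disjoint_family_on_def by blast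
qed (use assms in simp)

lemma block_of:
  assumes "i \<in> {1..n}"
  shows "block_of i \<in> {1..r}" "i \<in> block n I (block_of i)"
proof -
  obtain u where "u \<in> {1..r}" "i \<in> block n I u"
    using assms UN_block by blast
  then show "block_of i \<in> {1..r}" "i \<in> block n I (block_of i)"
    using block_of_eq by simp_all
qed

lemma sig_eq_block_sig:
  assumes "u \<in> {1..r}" "i \<in> block n I u"
  shows "sig n I i = block_sig n I u"
proof -
  have B: "block n I u \<in> blocks n I"
    using block_in_blocks[OF assms(1)] .
  then have "Min (block n I u) \<in> sig_class i"
    using blocks_eq_sig_class[OF B assms(2)] Min_in_block[OF B] by simp
  then show ?thesis
    by (simp add: block_sig_def sig_class_def)
qed

definition blocks_meet :: "nat \<Rightarrow> nat \<Rightarrow> bool" where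
  "blocks_meet u v \<longleftrightarrow> block_sig n I u \<inter> block_sig n I v \<noteq> {}"

lemma blocks_meet_sym: "blocks_meet u v \<longleftrightarrow> blocks_meet v u"
  by (auto simp: blocks_meet_def)

lemma blocks_meet_refl:
  assumes "u \<in> {1..r}"
  shows "blocks_meet u u"
proof -
  have B: "block n I u \<in> blocks n I"
    using block_in_blocks[OF assms] .
  then have "Min (block n I u) \<in> {1..n}"
    using Min_in_block blocks_subset by blast
  then show ?thesis
    using sig_nonempty by (simp add: blocks_meet_def block_sig_def)
qed

lemma compl_roots_iff_blocks_meet:
  assumes "i \<in> {1..n}" "j \<in> {1..n}" "i < j"
  shows "(i, j) \<in> C \<longleftrightarrow> blocks_meet (block_of i) (block_of j)"
  using compl_roots_iff_sig[OF assms(3,1,2)] sig_eq_block_sig[OF block_of(1,2)] assms(1,2)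
  by (simp add: blocks_meet_def)

lemma Rset_eq: "Rset n I u = {v \<in> {1..r}. u < v \<and> blocks_meet u v}"
  by (auto simp: Rset_def blocks_meet_def)

lemma arr_eq_image: "arr n I = root_hyperplane n ` C"
  unfolding arr_def root_hyperplane_def by force

lemma sum_Pow_arr: "(\<Sum>B\<in>Pow (arr n I). f B) = (\<Sum>E\<in>Pow C. f (root_hyperplane n ` E))"
proof -
  have inj: "inj_on (root_hyperplane n) C"
    using inj_on_root_hyperplane[OF compl_roots_subset] .
  have "Pow (arr n I) = image (root_hyperplane n) ` Pow C"
    unfolding arr_eq_image by (rule image_Pow_surj[OF refl, symmetric])
  then show ?thesis
    using sum.reindex[OF inj_on_image_Pow[OF inj], of f] by (simp add: comp_def)
qed

lemma arr_rank_arr: "arr_rank n (arr n I) = n - 1"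
proof -
  have "card (components n C) = 1"
    using full n_ge_2 by (intro card_components_path) (auto simp: is_full_def)
  then show ?thesis
    unfolding arr_eq_image by (simp add: arr_rank_root_hyperplanes[OF compl_roots_square])
qed

lemma card_components_bounds: "1 \<le> card (components n E)" "card (components n E) \<le> n"
  using card_components_pos[of n E] n_ge_2 card_components_le[of n E] by auto

lemma subset_compl_roots_facts:
  assumes "E \<subseteq> C"
  shows "arr_rank n (arr n I) - arr_rank n (root_hyperplane n ` E) = card (components n E) - 1"
    and "card (root_hyperplane n ` E) - arr_rank n (root_hyperplane n ` E) =
      card E - (n - card (components n E))"
proof -
  have E: "E \<subseteq> {1..n} \<times> {1..n}"
    using assms compl_roots_square by blast
  show "arr_rank n (arr n I) - arr_rank n (root_hyperplane n ` E) = card (components n E) - 1"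
    using card_components_bounds[of E]
    by (simp add: arr_rank_arr arr_rank_root_hyperplanes[OF E])
  have "card (root_hyperplane n ` E) = card E"
    using inj_on_subset[OF inj_on_root_hyperplane[OF compl_roots_subset] assms] by (rule card_image)
  then show "card (root_hyperplane n ` E) - arr_rank n (root_hyperplane n ` E) =
      card E - (n - card (components n E))"
    by (simp add: arr_rank_root_hyperplanes[OF E])
qed

lemma coboundary_eq_sum_edges:
  "coboundary n (arr n I) q t = (\<Sum>E\<in>Pow C. q ^ (card (components n E) - 1) * (t - 1) ^ card E)"
  unfolding coboundary_def sum_Pow_arr
  using subset_compl_roots_facts(1) inj_on_subset[OF inj_on_root_hyperplane[OF compl_roots_subset]]
  by (intro sum.cong refl) (simp add: card_image)

lemma tutte_eq_sum_edges:
  "tutte n (arr n I) x y =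
    (\<Sum>E\<in>Pow C. (x - 1) ^ (card (components n E) - 1) * (y - 1) ^ (card E - (n - card (components n E))))"
  unfolding tutte_def sum_Pow_arr
  using subset_compl_roots_facts by (intro sum.cong refl) simp


definition mono_edges :: "(nat \<Rightarrow> nat) \<Rightarrow> (nat \<times> nat) set" where
  "mono_edges x = {e \<in> C. x (fst e) = x (snd e)}"

lemma sum_colourings_eq_sum_edges:
  "(\<Sum>x\<in>colourings n p. (t::real) ^ card (mono_edges x)) =
    (\<Sum>E\<in>Pow C. real p ^ card (components n E) * (t - 1) ^ card E)"
proof -
  have "(\<Sum>x\<in>colourings n p. t ^ card (mono_edges x)) =
      (\<Sum>x\<in>colourings n p. \<Sum>E\<in>Pow C. if E \<subseteq> mono_edges x then (t - 1) ^ card E else 0)"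
  proof (intro sum.cong refl)
    fix x
    have "finite (mono_edges x)"
      using finite_compl_roots by (simp add: mono_edges_def)
    then have "t ^ card (mono_edges x) = (\<Sum>E\<in>Pow (mono_edges x). (t - 1) ^ card E)"
      using sum_Pow_power_card[of "mono_edges x" "t - 1"] by simp
    also have "\<dots> = (\<Sum>E\<in>{E \<in> Pow C. E \<subseteq> mono_edges x}. (t - 1) ^ card E)"
      by (intro sum.cong refl) (auto simp: mono_edges_def)
    finally show "t ^ card (mono_edges x) =
        (\<Sum>E\<in>Pow C. if E \<subseteq> mono_edges x then (t - 1) ^ card E else 0)"
      using finite_compl_roots by (simp add: sum.inter_filter[of "Pow C", symmetric])
  qed
  also have "\<dots> = (\<Sum>E\<in>Pow C. \<Sum>x\<in>colourings n p. if E \<subseteq> mono_edges x then (t - 1) ^ card E else 0)"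
    by (rule sum.swap)
  also have "\<dots> = (\<Sum>E\<in>Pow C. real p ^ card (components n E) * (t - 1) ^ card E)"
  proof (intro sum.cong refl)
    fix E assume E: "E \<in> Pow C"
    have "{x \<in> colourings n p. E \<subseteq> mono_edges x} =
        {x \<in> colourings n p. \<forall>(a, b) \<in> E. x a = x b}"
      using E by (auto simp: mono_edges_def)
    moreover have "E \<subseteq> {1..n} \<times> {1..n}"
      using E compl_roots_square by blast
    ultimately have "card {x \<in> colourings n p. E \<subseteq> mono_edges x} = p ^ card (components n E)"
      using card_colourings_constant_on_edges by simp
    then show "(\<Sum>x\<in>colourings n p. if E \<subseteq> mono_edges x then (t - 1) ^ card E else 0) =
        real p ^ card (components n E) * (t - 1) ^ card E"
      using finite_colourings by (simp add: sum.inter_filter[symmetric])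
  qed
  finally show ?thesis .
qed

lemma coboundary_eq_sum_colourings:
  "real p * coboundary n (arr n I) (real p) t = (\<Sum>x\<in>colourings n p. t ^ card (mono_edges x))"
proof -
  have "real p * real p ^ (k - 1) = real p ^ k" if "k \<ge> 1" for k
    using that by (cases k) simp_all
  then have "real p * real p ^ (card (components n E) - 1) = real p ^ card (components n E)" for E
    using card_components_bounds(1) by simp
  then show ?thesis
    unfolding coboundary_eq_sum_edges sum_colourings_eq_sum_edges sum_distrib_left
    by (simp add: mult.assoc[symmetric])
qed

definition block_counts :: "nat \<Rightarrow> (nat \<Rightarrow> nat) \<Rightarrow> nat \<Rightarrow> nat \<Rightarrow> nat" where
  "block_counts p x = (\<lambda>u s. if u \<in> {1..r} \<and> s \<in> {1..p} then card {i \<in> block n I u. x i = s} else 0)"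

definition chi_exponent :: "nat \<Rightarrow> (nat \<Rightarrow> nat \<Rightarrow> nat) \<Rightarrow> nat" where
  "chi_exponent p a = (\<Sum>u=1..r. \<Sum>s=1..p. (a u s choose 2) + a u s * (\<Sum>v\<in>Rset n I u. a v s))"

lemma card_compl_roots_within:
  assumes V: "V \<subseteq> {1..n}"
  shows "card {e \<in> C. fst e \<in> V \<and> snd e \<in> V} =
    (\<Sum>u=1..r. (card (V \<inter> block n I u) choose 2) +
      card (V \<inter> block n I u) * (\<Sum>v\<in>Rset n I u. card (V \<inter> block n I v)))"
proof -
  have "(i, j) \<in> C \<and> i \<in> V \<and> j \<in> V \<longleftrightarrow>
      i \<in> V \<and> j \<in> V \<and> i < j \<and> blocks_meet (block_of i) (block_of j)" for i j
  proof (cases "i \<in> V \<and> j \<in> V \<and> i < j")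
    case True
    then have "i \<in> {1..n}" "j \<in> {1..n}"
      using V by auto
    then show ?thesis
      using True compl_roots_iff_blocks_meet[of i j] by auto
  next
    case False
    then show ?thesis
      using compl_roots_subset by (auto simp: pos_roots_def)
  qed
  then have "{e \<in> C. fst e \<in> V \<and> snd e \<in> V} =
      {(i, j) \<in> V \<times> V. i < j \<and> blocks_meet (block_of i) (block_of j)}"
    by (intro set_eqI) (simp add: split_paired_all)
  then have "card {e \<in> C. fst e \<in> V \<and> snd e \<in> V} =
      card {(i, j) \<in> V \<times> V. i < j \<and> blocks_meet (block_of i) (block_of j)}"
    by (rule arg_cong)
  also have "\<dots> = (\<Sum>u=1..r. (card {i \<in> V. block_of i = u} choose 2) +
      card {i \<in> V. block_of i = u} * (\<Sum>v\<in>{v \<in> {1..r}. u < v \<and> blocks_meet u v}.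
        card {i \<in> V. block_of i = v}))"
  proof (rule card_pairs_less_by_class[of V "{1..r}" block_of blocks_meet])
    show "finite V"
      using V finite_subset by blast
    show "finite {1..r}" by simp
    show "block_of ` V \<subseteq> {1..r}"
      using V block_of(1) by blast
    show "blocks_meet u v \<longleftrightarrow> blocks_meet v u" for u v
      by (rule blocks_meet_sym)
    show "blocks_meet u u" if "u \<in> {1..r}" for u
      using that by (rule blocks_meet_refl)
  qed
  also have "\<dots> = (\<Sum>u=1..r. (card (V \<inter> block n I u) choose 2) +
      card (V \<inter> block n I u) * (\<Sum>v\<in>Rset n I u. card (V \<inter> block n I v)))"
  proof -
    have "{i \<in> V. block_of i = u} = V \<inter> block n I u" if "u \<in> {1..r}" for u
      using V block_of block_of_eq[OF that] by blast
    then show ?thesis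
      by (intro sum.cong refl) (auto simp: Rset_eq intro!: sum.cong)
  qed
  finally show ?thesis .
qed


lemma card_mono_edges:
  assumes x: "x \<in> colourings n p"
  shows "card (mono_edges x) = chi_exponent p (block_counts p x)"
proof -
  define V where "V s = {i \<in> {1..n}. x i = s}" for s
  have x_range: "x i \<in> {1..p}" if "i \<in> {1..n}" for i
    using x that by (auto simp: colourings_def)
  have "finite (mono_edges x)"
    using finite_compl_roots by (simp add: mono_edges_def)
  moreover have "(\<lambda>e. x (fst e)) ` mono_edges x \<subseteq> {1..p}"
    using x_range compl_roots_square by (auto simp: mono_edges_def)
  ultimately have "card (mono_edges x) = (\<Sum>s=1..p. card {e \<in> mono_edges x. x (fst e) = s})"
    using sum_by_class[of "mono_edges x" "{1..p}" "\<lambda>e. x (fst e)" "\<lambda>_. 1"] by simp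
  also have "\<dots> = (\<Sum>s=1..p. card {e \<in> C. fst e \<in> V s \<and> snd e \<in> V s})"
  proof (intro sum.cong refl arg_cong[where f = card])
    fix s
    show "{e \<in> mono_edges x. x (fst e) = s} = {e \<in> C. fst e \<in> V s \<and> snd e \<in> V s}"
      using compl_roots_square by (auto simp: mono_edges_def V_def)
  qed
  also have "\<dots> = (\<Sum>s=1..p. \<Sum>u=1..r. (card (V s \<inter> block n I u) choose 2) +
      card (V s \<inter> block n I u) * (\<Sum>v\<in>Rset n I u. card (V s \<inter> block n I v)))"
    by (intro sum.cong refl card_compl_roots_within) (auto simp: V_def)
  also have "\<dots> = (\<Sum>u=1..r. \<Sum>s=1..p. (card (V s \<inter> block n I u) choose 2) +
      card (V s \<inter> block n I u) * (\<Sum>v\<in>Rset n I u. card (V s \<inter> block n I v)))"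
    by (rule sum.swap)
  also have "\<dots> = chi_exponent p (block_counts p x)"
    unfolding chi_exponent_def
  proof (intro sum.cong refl)
    fix u s assume u: "u \<in> {1..r}" and s: "s \<in> {1..p}"
    have count: "card (V s \<inter> block n I v) = block_counts p x v s" if "v \<in> {1..r}" for v
    proof -
      have "V s \<inter> block n I v = {i \<in> block n I v. x i = s}"
        using block_subset[OF that] by (auto simp: V_def)
      then show ?thesis
        using that s by (simp add: block_counts_def)
    qed
    have "(\<Sum>v\<in>Rset n I u. card (V s \<inter> block n I v)) = (\<Sum>v\<in>Rset n I u. block_counts p x v s)"
      using count by (intro sum.cong refl) (auto simp: Rset_def)
    then show "(card (V s \<inter> block n I u) choose 2) +
        card (V s \<inter> block n I u) * (\<Sum>v\<in>Rset n I u. card (V s \<inter> block n I v)) =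
        (block_counts p x u s choose 2) + block_counts p x u s * (\<Sum>v\<in>Rset n I u. block_counts p x v s)"
      using count[OF u] by simp
  qed
  finally show ?thesis .
qed

lemma block_counts_in_families:
  assumes x: "x \<in> colourings n p"
  shows "block_counts p x \<in> families n I p"
proof -
  have "(\<Sum>s=1..p. block_counts p x u s) = card (block n I u)" if u: "u \<in> {1..r}" for u
  proof -
    have "x ` block n I u \<subseteq> {1..p}"
      using x block_subset[OF u] by (auto simp: colourings_def)
    then have "card (block n I u) = (\<Sum>s=1..p. card {i \<in> block n I u. x i = s})"
      using sum_by_class[of "block n I u" "{1..p}" x "\<lambda>_. 1"] finite_block[OF u] by simp
    then show ?thesis
      using u by (simp add: block_counts_def)
  qed
  then show ?thesis
    unfolding families_def by (auto simp: block_counts_def)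
qed

lemma finite_families: "finite (families n I p)"
proof -
  let ?D = "{1..r} \<times> {1..p}"
  let ?ext = "\<lambda>f u s. if (u, s) \<in> ?D then f (u, s) else (0::nat)"
  have "families n I p \<subseteq> ?ext ` PiE ?D (\<lambda>_. {0..n})"
  proof
    fix a assume a: "a \<in> families n I p"
    have "a u s \<le> n" if "(u, s) \<in> ?D" for u s
    proof -
      have "a u s \<le> (\<Sum>s=1..p. a u s)"
        using that by (intro member_le_sum) auto
      also have "\<dots> = card (block n I u)"
        using a that by (auto simp: families_def)
      also have "\<dots> \<le> n"
        using card_mono[OF _ block_subset[of u]] that by fastforce
      finally show ?thesis .
    qed
    then have "restrict (\<lambda>(u, s). a u s) ?D \<in> PiE ?D (\<lambda>_. {0..n})"
      by auto
    moreover have "a = ?ext (restrict (\<lambda>(u, s). a u s) ?D)"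
      using a by (auto simp: families_def fun_eq_iff)
    ultimately show "a \<in> ?ext ` PiE ?D (\<lambda>_. {0..n})"
      by (intro image_eqI[of a])
  qed
  then show ?thesis
    by (rule finite_subset) (simp add: finite_PiE)
qed

lemma multinomial_eq: "multinomial m (map f [1..<p+1]) = fact m / (\<Prod>s=1..p. fact (f s))"
proof -
  have "(\<Prod>k\<leftarrow>map f [1..<p+1]. (fact k :: real)) = (\<Prod>s\<leftarrow>[1..<p+1]. fact (f s))"
    by (simp add: comp_def)
  also have "\<dots> = (\<Prod>s\<in>set [1..<p+1]. fact (f s))"
    by (rule prod.distinct_set_conv_list[symmetric]) simp
  also have "set [1..<p+1] = {1..p}" by auto
  finally show ?thesis
    by (simp add: multinomial_def)
qed

text \<open>A colouring with prescribed block counts is a family of colourings of the blocks, one for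
  each block, with prescribed fibre sizes.\<close>
lemma card_block_counts_fibre:
  assumes a: "a \<in> families n I p"
  shows "real (card {x \<in> colourings n p. block_counts p x = a}) =
    (\<Prod>u=1..r. multinomial (card (block n I u)) (map (a u) [1..<p+1]))"
proof -
  let ?Y = "\<lambda>u. maps_with_fibres (block n I u) p (a u)"
  have a_out: "a u s = 0" if "u \<notin> {1..r} \<or> s \<notin> {1..p}" for u s
    using a that by (auto simp: families_def)
  have "block_counts p x = a \<longleftrightarrow> (\<forall>u\<in>{1..r}. restrict x (block n I u) \<in> ?Y u)"
    if "x \<in> colourings n p" for x
  proof -
    have "block_counts p x = a \<longleftrightarrow>
        (\<forall>u\<in>{1..r}. \<forall>s\<in>{1..p}. card {i \<in> block n I u. x i = s} = a u s)"
      using a_out by (auto simp: block_counts_def fun_eq_iff)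
    moreover have "restrict x (block n I u) \<in> ?Y u \<longleftrightarrow>
        (\<forall>s\<in>{1..p}. card {i \<in> block n I u. x i = s} = a u s)" if "u \<in> {1..r}" for u
    proof -
      have "restrict x (block n I u) \<in> PiE (block n I u) (\<lambda>_. {1..p})"
        using \<open>x \<in> colourings n p\<close> block_subset[OF that] by (auto simp: colourings_def)
      moreover have "{i \<in> block n I u. restrict x (block n I u) i = s} = {i \<in> block n I u. x i = s}"
        for s by auto
      ultimately show ?thesis
        by (simp add: maps_with_fibres_def)
    qed
    ultimately show ?thesis
      by simp
  qed
  then have "{x \<in> colourings n p. block_counts p x = a} =
      {x \<in> PiE {1..n} (\<lambda>_. {1..p}). \<forall>u\<in>{1..r}. restrict x (block n I u) \<in> ?Y u}"
    unfolding colourings_def by blast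
  also have "\<dots> = {x \<in> PiE (\<Union>u\<in>{1..r}. block n I u) (\<lambda>_. {1..p}).
      \<forall>u\<in>{1..r}. restrict x (block n I u) \<in> ?Y u}"
    by (simp only: UN_block)
  finally have "{x \<in> colourings n p. block_counts p x = a} =
      {x \<in> PiE (\<Union>u\<in>{1..r}. block n I u) (\<lambda>_. {1..p}).
        \<forall>u\<in>{1..r}. restrict x (block n I u) \<in> ?Y u}" .
  moreover have "card {x \<in> PiE (\<Union>u\<in>{1..r}. block n I u) (\<lambda>_. {1..p}).
      \<forall>u\<in>{1..r}. restrict x (block n I u) \<in> ?Y u} = (\<Prod>u=1..r. card (?Y u))"
    by (rule card_PiE_disjoint_union[OF _ disjoint_family_on_block]) (auto simp: maps_with_fibres_def)
  ultimately have "card {x \<in> colourings n p. block_counts p x = a} = (\<Prod>u=1..r. card (?Y u))"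
    by simp
  moreover have "real (card (?Y u)) = multinomial (card (block n I u)) (map (a u) [1..<p+1])"
    if "u \<in> {1..r}" for u
  proof -
    have "(\<Sum>s=1..p. a u s) = card (block n I u)"
      using a that by (simp add: families_def)
    then show ?thesis
      unfolding multinomial_eq by (rule card_maps_with_fibres[OF finite_block[OF that]])
  qed
  ultimately show ?thesis
    by simp
qed

lemma sum_colourings_eq_chi_sum:
  "(\<Sum>x\<in>colourings n p. (t::real) ^ card (mono_edges x)) =
    (\<Sum>a\<in>families n I p. (\<Prod>u=1..r. multinomial (card (block n I u)) (map (a u) [1..<p+1])) *
      t ^ chi_exponent p a)"
proof -
  have "(\<Sum>x\<in>colourings n p. t ^ card (mono_edges x)) =
      (\<Sum>x\<in>colourings n p. t ^ chi_exponent p (block_counts p x))"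
    by (intro sum.cong refl) (simp add: card_mono_edges)
  also have "\<dots> = (\<Sum>a\<in>families n I p.
      \<Sum>x\<in>{x \<in> colourings n p. block_counts p x = a}. t ^ chi_exponent p (block_counts p x))"
    using finite_colourings finite_families block_counts_in_families
    by (intro sum.group[symmetric]) auto
  also have "\<dots> = (\<Sum>a\<in>families n I p. real (card {x \<in> colourings n p. block_counts p x = a}) *
      t ^ chi_exponent p a)"
    by (intro sum.cong refl) simp
  finally show ?thesis
    by (simp add: card_block_counts_fibre)
qed

lemma coboundary_eq_chi_formula:
  assumes "p > 0"
  shows "coboundary n (arr n I) (real p) t = chi_formula n I p t"
proof -
  have "real p * coboundary n (arr n I) (real p) t = real p * chi_formula n I p t"
    unfolding coboundary_eq_sum_colourings sum_colourings_eq_chi_sum chi_formula_def chi_exponent_def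
    using assms by simp
  then show ?thesis
    using assms by simp
qed

lemma scaled_tutte_eq_sum_edges:
  "(y - 1) ^ (n - 1) * tutte n (arr n I) x y =
    (\<Sum>E\<in>Pow C. (y - 1) ^ card E * ((x - 1) * (y - 1)) ^ (card (components n E) - 1))"
  unfolding tutte_eq_sum_edges sum_distrib_left
proof (intro sum.cong refl)
  fix E assume E: "E \<in> Pow C"
  let ?c = "card (components n E)"
  have "n \<le> ?c + card E"
    using E compl_roots_square finite_compl_roots
    by (intro card_components_edges) (auto intro: finite_subset)
  then have "n - 1 + (card E - (n - ?c)) = (?c - 1) + card E"
    using card_components_bounds[of E] by linarith
  then have y_pow: "(y - 1) ^ (n - 1) * (y - 1) ^ (card E - (n - ?c)) = (y - 1) ^ (?c - 1) * (y - 1) ^ card E"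
    by (metis power_add)
  have "(y - 1) ^ (n - 1) * ((x - 1) ^ (?c - 1) * (y - 1) ^ (card E - (n - ?c))) =
      (x - 1) ^ (?c - 1) * ((y - 1) ^ (n - 1) * (y - 1) ^ (card E - (n - ?c)))"
    by (simp only: ac_simps)
  also have "\<dots> = (y - 1) ^ card E * ((x - 1) * (y - 1)) ^ (?c - 1)"
    unfolding y_pow power_mult_distrib by (simp only: ac_simps)
  finally show "(y - 1) ^ (n - 1) * ((x - 1) ^ (?c - 1) * (y - 1) ^ (card E - (n - ?c))) =
      (y - 1) ^ card E * ((x - 1) * (y - 1)) ^ (?c - 1)" .
qed

lemma tutte_eq_interpolation:
  assumes y: "y \<noteq> 1"
  shows "tutte n (arr n I) x y =
    1 / (y - 1) ^ (n - 1) *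
      (\<Sum>i=1..n. (\<Prod>j\<in>{1..n} - {i}.
        ((x - 1) * (y - 1) - real (oddp j)) / (real (oddp i) - real (oddp j))) *
          coboundary n (arr n I) (real (oddp i)) y)"
proof -
  let ?q = "(x - 1) * (y - 1)"
  have inj: "inj_on (\<lambda>i. real (oddp i)) {1..n}"
  proof (rule inj_onI)
    fix i j assume "i \<in> {1..n}" "j \<in> {1..n}" "real (oddp i) = real (oddp j)"
    then show "i = j"
      using inj_onD[OF inj_on_oddp, of i j] by simp
  qed
  have "(y - 1) ^ (n - 1) * tutte n (arr n I) x y =
      (\<Sum>i=1..n. (\<Prod>j\<in>{1..n} - {i}. (?q - real (oddp j)) / (real (oddp i) - real (oddp j))) *
        (\<Sum>E\<in>Pow C. (y - 1) ^ card E * real (oddp i) ^ (card (components n E) - 1)))"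
    unfolding scaled_tutte_eq_sum_edges
  proof (rule lagrange_interpolation_sum[OF _ _ inj])
    show "finite (Pow C)"
      using finite_compl_roots by simp
    show "card (components n E) - 1 < n" for E
      using card_components_bounds[of E] by linarith
  qed
  also have "\<dots> = (\<Sum>i=1..n. (\<Prod>j\<in>{1..n} - {i}. (?q - real (oddp j)) / (real (oddp i) - real (oddp j))) *
      coboundary n (arr n I) (real (oddp i)) y)"
    unfolding coboundary_eq_sum_edges by (simp add: mult.commute)
  finally have "(y - 1) ^ (n - 1) * tutte n (arr n I) x y =
      (\<Sum>i=1..n. (\<Prod>j\<in>{1..n} - {i}. (?q - real (oddp j)) / (real (oddp i) - real (oddp j))) *
        coboundary n (arr n I) (real (oddp i)) y)" .
  moreover have "(y - 1) ^ (n - 1) \<noteq> 0"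
    using y by simp
  moreover have "a * T = S \<Longrightarrow> a \<noteq> 0 \<Longrightarrow> T = 1 / a * S" for a T S :: real
    by (simp add: field_simps)
  ultimately show ?thesis
    by blast
qed

end

theorem mainTheorem12:
  fixes n :: nat and I :: "(nat \<times> nat) set"
  assumes "n \<ge> 2" and "is_ideal n I" and "is_full n (compl_roots n I)"
  shows "(\<forall>x y :: real. y \<noteq> 1 \<longrightarrow>
            tutte n (arr n I) x y =
              1 / (y - 1) ^ (n - 1) *
              (\<Sum>i=1..n. (\<Prod>j\<in>{1..n} - {i}.
                   ((x - 1) * (y - 1) - real (oddp j)) / (real (oddp i) - real (oddp j))) *
                 coboundary n (arr n I) (real (oddp i)) y))
       \<and> (\<forall>p t. prime p \<and> odd p \<longrightarrow>
            coboundary n (arr n I) (real p) t = chi_formula n I p t)"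
proof -
  interpret full_ideal n I
    using assms by unfold_locales
  show ?thesis
    using tutte_eq_interpolation coboundary_eq_chi_formula prime_gt_0_nat by blast
qed

end
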